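(* (i) For every integer $d\geq 2$ there exist a partition $\mathcal{P}$ of $\mathbb{R}^{d}$ and $M\in(0,\infty)$ such that every $X\in\mathcal{P}$ is Lebesgue measurable with $m(X)<M$, together with a function $\epsilon:\mathbb{R}^{d}\to(0,\infty)$ such that $|\mathcal{N}_{\epsilon(\vec{p})}(\vec{p})|\leq d$ for all $\vec{p}\in\mathbb{R}^{d}$. (ii) For $d=1$: if $\mathcal{P}$ is a partition of $\mathbb{R}$ and $M\in(0,\infty)$ is such that every $X\in\mathcal{P}$ is Lebesgue measurable with $m(X)<M$, then for every function $\epsilon:\mathbb{R}\to(0,\infty)$ there exists $p\in\mathbb{R}$ with $|\mathcal{N}_{\epsilon(p)}(p)|\geq 2$.
   Context: $m$ is Lebesgue measure. On $\mathbb{R}^d$ use $d_{max}(\vec{x},\vec{y})=\max_i|x_i-y_i|$, $\overline{B}_{r}(\vec{p})=\{\vec{x}:d_{max}(\vec{x},\vec{p})\le r\}$ and $\mathcal{N}_{r}(\vec{p})=\{X\in\mathcal{P}: X\cap\overline{B}_{r}(\vec{p})\neq\emptyset\}$. *)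

theory Defs
  imports "HOL-Analysis.Analysis" "HOL-Library.Disjoint_Sets"
begin

definition maxball :: "real^'n \<Rightarrow> real \<Rightarrow> (real^'n) set" where
  "maxball p r = {x. \<forall>i. \<bar>x$i - p$i\<bar> \<le> r}"

definition maxball1 :: "real \<Rightarrow> real \<Rightarrow> real set" where
  "maxball1 p r = {x. \<bar>x - p\<bar> \<le> r}"

definition nbhd :: "'a set set \<Rightarrow> 'a set \<Rightarrow> 'a set set" where
  "nbhd P B = {X \<in> P. X \<inter> B \<noteq> {}}"

end

theory Submission
  imports Defs
begin

(* For d >= 2, cut R^d into the shells {x. n <= (2 |x|_inf)^d < n + 1}: each is the difference
   of two centred cubes of volumes n + 1 and n, hence has measure 1, and since the volume
   function (2 |x|_inf)^d is continuous, a small enough ball meets at most two consecutive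
   shells, and 2 <= d.
   For d = 1, if some ball around every point met only one member of the partition, every
   member would be open; as R is connected, the partition would be {R}, of infinite measure. *)

definition unit_shell :: "('a \<Rightarrow> real) \<Rightarrow> nat \<Rightarrow> 'a set" where
  "unit_shell f n = f -` {real n..<real n + 1}"

lemma mem_unit_shell_iff: "x \<in> unit_shell f n \<longleftrightarrow> 0 \<le> f x \<and> n = nat \<lfloor>f x\<rfloor>"
  unfolding unit_shell_def by (auto simp: le_nat_iff) linarith+

lemma partition_on_unit_shells:
  assumes "range f = {0..}"
  shows "partition_on UNIV (range (unit_shell f))"
proof (rule partition_onI)
  show "\<Union> (range (unit_shell f)) = UNIV"
  proof safe
    fix x
    have "x \<in> unit_shell f (nat \<lfloor>f x\<rfloor>)" using assms by (auto simp: mem_unit_shell_iff)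
    then show "x \<in> \<Union> (range (unit_shell f))" by blast
  qed auto
  show "disjnt X Y" if "X \<in> range (unit_shell f)" "Y \<in> range (unit_shell f)" "X \<noteq> Y" for X Y
    using that by (auto simp: disjnt_def mem_unit_shell_iff)
  have "unit_shell f n \<noteq> {}" for n
  proof -
    obtain x where "f x = real n" using assms by (metis atLeast_iff imageE of_nat_0_le_iff)
    then have "x \<in> unit_shell f n" unfolding unit_shell_def by simp
    then show ?thesis by blast
  qed
  then show "{} \<notin> range (unit_shell f)" by (metis rangeE)
qed

lemma unit_shells_near_point:
  fixes f :: "'a::metric_space \<Rightarrow> real"
  assumes "isCont f p"
  shows "\<exists>e>0. \<exists>k. nbhd (range (unit_shell f)) (ball p e) \<subseteq> unit_shell f ` {k, Suc k}"
proof -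
  obtain e where "e > 0" and close: "\<And>x. dist x p < e \<Longrightarrow> \<bar>f x - f p\<bar> < 1/2"
    using assms unfolding continuous_at_eps_delta dist_real_def
    by (metis zero_less_divide_1_iff zero_less_numeral)
  (* the index of a shell meeting the ball lies in the interval (f p - 3/2, f p + 1/2) of length 2 *)
  define k where "k = nat (\<lfloor>f p - 3/2\<rfloor> + 1)"
  have "n = k \<or> n = Suc k" if "x \<in> unit_shell f n" "x \<in> ball p e" for n x
  proof -
    have "real n \<le> f x" "f x < real n + 1" using that(1) unfolding unit_shell_def by auto
    moreover have "\<bar>f x - f p\<bar> < 1/2" using that(2) close by (simp add: dist_commute)
    ultimately show ?thesis unfolding k_def by linarith
  qed
  then have "nbhd (range (unit_shell f)) (ball p e) \<subseteq> unit_shell f ` {k, Suc k}"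
    unfolding nbhd_def by blast
  with \<open>e > 0\<close> show ?thesis by blast
qed

lemma unit_shell_measure:
  assumes sets: "\<And>c. 0 \<le> c \<Longrightarrow> {x. f x < c} \<in> sets M"
    and measure: "\<And>c. 0 \<le> c \<Longrightarrow> emeasure M {x. f x < c} = ennreal c"
  shows "unit_shell f n \<in> sets M" and "emeasure M (unit_shell f n) = 1"
proof -
  have shell: "unit_shell f n = {x. f x < real n + 1} - {x. f x < real n}"
    unfolding unit_shell_def by auto
  then show "unit_shell f n \<in> sets M" using sets by auto
  have "emeasure M (unit_shell f n) = ennreal (real n + 1) - ennreal (real n)"
    unfolding shell by (subst emeasure_Diff) (auto simp: sets measure)
  also have "\<dots> = 1" by (subst ennreal_minus) auto
  finally show "emeasure M (unit_shell f n) = 1" .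
qed

lemma nbhd_mono: "A \<subseteq> B \<Longrightarrow> nbhd P A \<subseteq> nbhd P B"
  unfolding nbhd_def by blast

definition cube_volume :: "real^'n \<Rightarrow> real" where
  "cube_volume x = (2 * infnorm x) ^ CARD('n)"

lemma infnorm_less_iff_cart: "infnorm (x::real^'n) < a \<longleftrightarrow> (\<forall>i. \<bar>x$i\<bar> < a)"
proof
  show "infnorm x < a \<Longrightarrow> \<forall>i. \<bar>x$i\<bar> < a"
    using component_le_infnorm_cart[of x] by (meson le_less_trans)
  assume "\<forall>i. \<bar>x$i\<bar> < a"
  moreover have "{\<bar>x$i\<bar> |i. i \<in> UNIV} = range (\<lambda>i. \<bar>x$i\<bar>)" by blast
  ultimately show "infnorm x < a"
    unfolding infnorm_cart by (simp add: cSup_eq_Max)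
qed

lemma infnorm_const_cart: "0 \<le> t \<Longrightarrow> infnorm ((\<chi> i. t) :: real^'n) = t"
proof -
  assume "0 \<le> t"
  then have "{\<bar>(\<chi> i. t :: real^'n)$i\<bar> |i. i \<in> UNIV} = {t}" by auto
  then show ?thesis unfolding infnorm_cart by simp
qed

lemma range_cube_volume: "range (cube_volume :: real^'n \<Rightarrow> real) = {0..}"
proof safe
  fix c :: real assume "0 \<le> c"
  then have "cube_volume ((\<chi> i. root CARD('n) c / 2) :: real^'n) = c"
    unfolding cube_volume_def by (simp add: infnorm_const_cart)
  then show "c \<in> range (cube_volume :: real^'n \<Rightarrow> real)" by (metis rangeI)
qed (simp add: cube_volume_def infnorm_pos_le)

lemma cube_volume_less_eq_box:
  assumes "0 \<le> c"
  defines "r \<equiv> root CARD('n) c / 2"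
  shows "{x::real^'n. cube_volume x < c} = box (\<chi> i. - r) (\<chi> i. r)"
proof -
  have "cube_volume x < c \<longleftrightarrow> infnorm x < r" for x :: "real^'n"
  proof -
    have "cube_volume x < c \<longleftrightarrow> root CARD('n) (cube_volume x) < root CARD('n) c"
      by simp
    also have "root CARD('n) (cube_volume x) = 2 * infnorm x"
      unfolding cube_volume_def by (subst real_root_power_cancel) (auto simp: infnorm_pos_le)
    finally show ?thesis unfolding r_def by linarith
  qed
  then show ?thesis
    by (auto simp: infnorm_less_iff_cart mem_box_cart abs_less_iff minus_less_iff)
qed

lemma sets_cube_volume_less: "0 \<le> c \<Longrightarrow> {x::real^'n. cube_volume x < c} \<in> sets lebesgue"
  by (simp add: cube_volume_less_eq_box)

lemma emeasure_centred_box_cart: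
  assumes "0 \<le> r"
  shows "emeasure lebesgue (box (\<chi> i. - r) (\<chi> i. r) :: (real^'n) set) = ennreal ((2 * r) ^ CARD('n))"
proof -
  have inner_const: "(\<chi> i. t :: real^'n) \<bullet> b = t" if "b \<in> Basis" for t b
    using that by (auto simp: Basis_vec_def inner_axis)
  have "emeasure lborel (box (\<chi> i. - r) (\<chi> i. r) :: (real^'n) set)
      = ennreal (\<Prod>b\<in>(Basis :: (real^'n) set). 2 * r)"
    using assms by (subst emeasure_lborel_box) (auto simp: inner_diff_left inner_const)
  then show ?thesis by simp
qed

lemma emeasure_cube_volume_less:
  assumes "0 \<le> c"
  shows "emeasure lebesgue {x::real^'n. cube_volume x < c} = ennreal c"
proof -
  have "(2 * (root CARD('n) c / 2)) ^ CARD('n) = c" using assms by simp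
  then show ?thesis
    using assms by (simp only: cube_volume_less_eq_box emeasure_centred_box_cart real_root_ge_zero
        divide_nonneg_pos zero_less_numeral)
qed

lemma maxball_subset_cball: "maxball (p::real^'n) r \<subseteq> cball p (real CARD('n) * r)"
proof
  fix x assume "x \<in> maxball p r"
  then have "\<bar>(p - x)$i\<bar> \<le> r" for i unfolding maxball_def by (simp add: abs_minus_commute)
  then have "norm (p - x) \<le> CARD('n) * r"
    using norm_le_l1_cart[of "p - x"] sum_bounded_above[of UNIV "\<lambda>i. \<bar>(p - x)$i\<bar>" r] by simp
  then show "x \<in> cball p (real CARD('n) * r)" by (simp add: dist_norm)
qed

lemma cube_volume_shells_locally_two:
  "\<exists>\<epsilon>. (\<forall>p. 0 < \<epsilon> p) \<and>
     (\<forall>p::real^'n. finite (nbhd (range (unit_shell cube_volume)) (maxball p (\<epsilon> p))) \<and>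
        card (nbhd (range (unit_shell cube_volume)) (maxball p (\<epsilon> p))) \<le> 2)"
proof -
  let ?shell = "unit_shell (cube_volume :: real^'n \<Rightarrow> real)"
  have "\<exists>r>0. finite (nbhd (range ?shell) (maxball p r)) \<and> card (nbhd (range ?shell) (maxball p r)) \<le> 2"
    for p :: "real^'n"
  proof -
    have "isCont cube_volume p" unfolding cube_volume_def by (intro continuous_intros)
    then obtain e k where "e > 0" and near: "nbhd (range ?shell) (ball p e) \<subseteq> ?shell ` {k, Suc k}"
      using unit_shells_near_point by blast
    define r where "r = e / (2 * real CARD('n))"
    have "maxball p r \<subseteq> cball p (e / 2)"
      using maxball_subset_cball[of p r] by (simp add: r_def)
    also have "\<dots> \<subseteq> ball p e" using \<open>e > 0\<close> by (simp add: subset_eq)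
    finally have sub: "nbhd (range ?shell) (maxball p r) \<subseteq> ?shell ` {k, Suc k}"
      using near nbhd_mono by blast
    have "card (?shell ` {k, Suc k}) \<le> 2"
      using card_image_le[of "{k, Suc k}" ?shell] by (simp add: numeral_2_eq_2)
    moreover have "card (nbhd (range ?shell) (maxball p r)) \<le> card (?shell ` {k, Suc k})"
      using sub by (intro card_mono) auto
    moreover have "finite (nbhd (range ?shell) (maxball p r))"
      using sub by (rule finite_subset) simp
    moreover have "r > 0" using \<open>e > 0\<close> by (simp add: r_def)
    ultimately show ?thesis by (meson order_trans)
  qed
  then show ?thesis by metis
qed

lemma exists_partition_unit_measure_locally_two:
  "\<exists>(P :: (real^'n) set set) (M::real) (\<epsilon> :: real^'n \<Rightarrow> real).
     partition_on UNIV P \<and> 0 < M \<and>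
     (\<forall>X\<in>P. X \<in> sets lebesgue \<and> emeasure lebesgue X < ennreal M) \<and>
     (\<forall>p. \<epsilon> p > 0) \<and>
     (\<forall>p. finite (nbhd P (maxball p (\<epsilon> p))) \<and> card (nbhd P (maxball p (\<epsilon> p))) \<le> 2)"
proof -
  let ?P = "range (unit_shell (cube_volume :: real^'n \<Rightarrow> real))"
  have "partition_on UNIV ?P" by (rule partition_on_unit_shells[OF range_cube_volume])
  moreover have "\<forall>X\<in>?P. X \<in> sets lebesgue \<and> emeasure lebesgue X < ennreal 2"
  proof
    fix X assume "X \<in> ?P"
    then obtain n where "X = unit_shell cube_volume n" by blast
    then show "X \<in> sets lebesgue \<and> emeasure lebesgue X < ennreal 2"
      using unit_shell_measure[OF sets_cube_volume_less[where 'n='n] emeasure_cube_volume_less[where 'n='n], of n]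
      by simp
  qed
  moreover have "(0::real) < 2" by simp
  ultimately show ?thesis
    using cube_volume_shells_locally_two[where 'n='n] by blast
qed

lemma maxball1_eq_cball: "maxball1 p r = cball p r"
  by (auto simp: maxball1_def dist_real_def abs_minus_commute)

lemma partition_member_open_if_locally_single:
  fixes P :: "'a::metric_space set set"
  assumes P: "partition_on UNIV P" and "X \<in> P"
    and pos: "\<And>p. 0 < \<epsilon> p"
    and single: "\<And>p. finite (nbhd P (cball p (\<epsilon> p))) \<and> card (nbhd P (cball p (\<epsilon> p))) \<le> 1"
  shows "open X"
  unfolding open_contains_ball
proof
  fix p assume "p \<in> X"
  have "ball p (\<epsilon> p) \<subseteq> X"
  proof
    fix y assume "y \<in> ball p (\<epsilon> p)"
    obtain Y where "Y \<in> P" "y \<in> Y" using partition_onD1[OF P] by blast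
    have "X \<in> nbhd P (cball p (\<epsilon> p))"
      using \<open>X \<in> P\<close> \<open>p \<in> X\<close> pos[of p] unfolding nbhd_def by fastforce
    moreover have "Y \<in> nbhd P (cball p (\<epsilon> p))"
      using \<open>Y \<in> P\<close> \<open>y \<in> Y\<close> \<open>y \<in> ball p (\<epsilon> p)\<close> unfolding nbhd_def by fastforce
    ultimately have "X = Y" using single[of p] by (metis card_le_Suc0_iff_eq One_nat_def)
    then show "y \<in> X" using \<open>y \<in> Y\<close> by simp
  qed
  then show "\<exists>e>0. ball p e \<subseteq> X" using pos by blast
qed

lemma partition_on_connected_open_eq_UNIV:
  fixes P :: "'a::topological_space set set"
  assumes "connected (UNIV :: 'a set)" and P: "partition_on UNIV P"
    and "\<And>Y. Y \<in> P \<Longrightarrow> open Y" and "X \<in> P"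
  shows "X = UNIV"
proof -
  let ?rest = "\<Union>(P - {X})"
  have "open X" "open ?rest" using assms by auto
  moreover have "X \<inter> ?rest = {}"
    using partition_onD2[OF P] \<open>X \<in> P\<close> by (auto simp: disjoint_def)
  moreover have "X \<union> ?rest = UNIV" using partition_onD1[OF P] by blast
  moreover have "X \<noteq> {}" using partition_onD3[OF P] \<open>X \<in> P\<close> by blast
  ultimately have "?rest = {}" using connectedD[OF assms(1) \<open>open X\<close> \<open>open ?rest\<close>] by auto
  then show "X = UNIV" using \<open>X \<union> ?rest = UNIV\<close> by blast
qed

lemma partition_of_real_line_not_locally_single:
  fixes P :: "real set set"
  assumes P: "partition_on UNIV P"
    and bounded: "\<forall>X\<in>P. X \<in> sets lebesgue \<and> emeasure lebesgue X < ennreal M"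
    and pos: "\<forall>p. 0 < \<epsilon> p"
  shows "\<exists>p. infinite (nbhd P (maxball1 p (\<epsilon> p))) \<or> card (nbhd P (maxball1 p (\<epsilon> p))) \<ge> 2"
proof (rule ccontr)
  assume "\<not> ?thesis"
  then have single: "finite (nbhd P (cball p (\<epsilon> p))) \<and> card (nbhd P (cball p (\<epsilon> p))) \<le> 1" for p
    by (metis maxball1_eq_cball One_nat_def Suc_1 not_less_eq_eq)
  have "open X" if "X \<in> P" for X
    using partition_member_open_if_locally_single[OF P that] pos single by blast
  moreover obtain X where "X \<in> P" using partition_onD1[OF P] by blast
  ultimately have "X = UNIV" using partition_on_connected_open_eq_UNIV[OF connected_UNIV P] by blast
  have "emeasure lebesgue X < ennreal M" using bounded \<open>X \<in> P\<close> by blast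
  also have "\<dots> < \<infinity>" by simp
  finally show False using \<open>X = UNIV\<close> by simp
qed

theorem mainTheorem16:
  assumes "CARD('n::finite) \<ge> 2"
  shows "(\<exists>(P :: (real^'n) set set) (M::real) (\<epsilon> :: real^'n \<Rightarrow> real).
            partition_on UNIV P \<and> 0 < M \<and>
            (\<forall>X\<in>P. X \<in> sets lebesgue \<and> emeasure lebesgue X < ennreal M) \<and>
            (\<forall>p. \<epsilon> p > 0) \<and>
            (\<forall>p. finite (nbhd P (maxball p (\<epsilon> p))) \<and>
                 card (nbhd P (maxball p (\<epsilon> p))) \<le> CARD('n)))
       \<and> (\<forall>(P :: real set set) (M::real).
            partition_on UNIV P \<and> 0 < M \<and>
            (\<forall>X\<in>P. X \<in> sets lebesgue \<and> emeasure lebesgue X < ennreal M) \<longrightarrow>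
            (\<forall>\<epsilon> :: real \<Rightarrow> real. (\<forall>p. \<epsilon> p > 0) \<longrightarrow>
               (\<exists>p. infinite (nbhd P (maxball1 p (\<epsilon> p))) \<or>
                    card (nbhd P (maxball1 p (\<epsilon> p))) \<ge> 2)))"
proof (intro conjI allI impI, goal_cases)
  case 1
  show ?case using exists_partition_unit_measure_locally_two order_trans[OF _ assms] by blast
next
  case 2
  then show ?case using partition_of_real_line_not_locally_single by blast
qed

end
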